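(* Assume (A1)–(A3), the latent index model (LI) below, and that $\Gamma^{Wald}$ is positive definite. Let $w^P$ be the MTE weight function of a policy that changes the propensity score distribution. Then there exists a unique $$\omega^{PRTE}=\arg\min_{\omega\in\mathcal S}\omega'\Gamma^{Wald}\omega,\qquad\text{where}\quad\mathcal S=\arg\min_{\omega\in\Delta^{L-1}}\int_0^1\bigl[\bar h(u;\omega)-w^P(u)\bigr]^2du.$$
   Context: Observe i.i.d. $(Y_i,D_i,\mathbf Z_i)$, $Y_i\in\mathbb R$, $D_i\in\{0,1\}$, $\mathbf Z_i=(Z_{1i},\dots,Z_{Li})'\in\{0,1\}^L$, $L\ge2$; potential outcomes $Y_i(0),Y_i(1)$, compliance type $D_i(\cdot):\{0,1\}^L\to\{0,1\}$, $D_i=D_i(\mathbf Z_i)$, $Y_i=D_iY_i(1)+(1-D_i)Y_i(0)$. $p_\ell=P(Z_{\ell i}=1)$, $\pi_\ell,\rho_\ell$ the differences of $\mathbb E[D_i\mid Z_{\ell i}=z]$, $\mathbb E[Y_i\mid Z_{\ell i}=z]$ between $z=1,0$, $\mathrm{Wald}_\ell=\rho_\ell/\pi_\ell$, $\gamma_\ell=\mathrm{Cov}(D_i,Z_{\ell i})$, $\Sigma_Z=\mathrm{Var}(\mathbf Z_i)$. $\Gamma^{Wald}_{\ell k}=\mathbb E[\tilde\epsilon_{i,\ell}\tilde\epsilon_{i,k}(Z_{\ell i}-p_\ell)(Z_{ki}-p_k)]/(\gamma_\ell\gamma_k)$, $\tilde\epsilon_{i,\ell}=Y_i-\mathrm{Wald}_\ell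 D_i-(\mathbb E[Y_i]-\mathrm{Wald}_\ell\mathbb E[D_i])$. $\Delta^{L-1}$ is the probability simplex in $\mathbb R^L$. (LI): $D_i=\mathbf 1\{V(\mathbf Z_i)\ge U_i\}$, $U_i\sim\mathrm{Uniform}(0,1)$ conditional on potential outcomes; $p(z)=V(z)=P(D_i=1\mid\mathbf Z_i=z)$; $h_\ell(u)=\dfrac{P(p(\mathbf Z_i)\ge u\mid Z_{\ell i}=1)-P(p(\mathbf Z_i)\ge u\mid Z_{\ell i}=0)}{\mathbb E[p(\mathbf Z_i)\mid Z_{\ell i}=1]-\mathbb E[p(\mathbf Z_i)\mid Z_{\ell i}=0]}$, $\bar h(u;\omega)=\sum_\ell\omega_\ell h_\ell(u)$. A policy moving the instrument distribution from $F_0$ to $F_1$ has weight $w^P(u)=(F_0(u)-F_1(u))/\int_0^1(F_0(s)-F_1(s))ds$, where $F_j(u)=P(p(\mathbf Z_i)\ge u\mid\text{policy }j)$ (denominator assumed nonzero). Assumptions: (A1) $(Y_i(0),Y_i(1),D_i(\cdot))$ independent of $\mathbf Z_i$. (A2) $D_i(z)$ nondecreasing in each coordinate for every $i$. (A3) $p_\ell>0$, $\pi_\ell>0$ for all $\ell$; $\Sigma_Z$ positive definite. *)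

theory Defs
  imports "HOL-Probability.Probability"
begin

text \<open>Population quantities for one draw (Y, D, Z) from the probability space M.
  Instruments are indexed by a finite type 'l; Z \<omega> l is Z_l.\<close>

definition cexp :: "'a measure \<Rightarrow> ('a \<Rightarrow> real) \<Rightarrow> 'a set \<Rightarrow> real" where
  "cexp M X A = (\<integral>\<omega>. indicator A \<omega> * X \<omega> \<partial>M) / measure M A"

definition evZ :: "'a measure \<Rightarrow> ('a \<Rightarrow> 'l \<Rightarrow> bool) \<Rightarrow> 'l \<Rightarrow> bool \<Rightarrow> 'a set" where
  "evZ M Z l z = {\<omega> \<in> space M. Z \<omega> l = z}"

definition cdiff :: "'a measure \<Rightarrow> ('a \<Rightarrow> 'l \<Rightarrow> bool) \<Rightarrow> ('a \<Rightarrow> real) \<Rightarrow> 'l \<Rightarrow> real" where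
  "cdiff M Z X l = cexp M X (evZ M Z l True) - cexp M X (evZ M Z l False)"

definition pZ :: "'a measure \<Rightarrow> ('a \<Rightarrow> 'l \<Rightarrow> bool) \<Rightarrow> 'l \<Rightarrow> real" where
  "pZ M Z l = measure M (evZ M Z l True)"

definition piIV :: "'a measure \<Rightarrow> ('a \<Rightarrow> bool) \<Rightarrow> ('a \<Rightarrow> 'l \<Rightarrow> bool) \<Rightarrow> 'l \<Rightarrow> real" where
  "piIV M D Z l = cdiff M Z (\<lambda>\<omega>. of_bool (D \<omega>)) l"

definition rhoIV :: "'a measure \<Rightarrow> ('a \<Rightarrow> real) \<Rightarrow> ('a \<Rightarrow> 'l \<Rightarrow> bool) \<Rightarrow> 'l \<Rightarrow> real" where
  "rhoIV M Y Z l = cdiff M Z Y l"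

definition Wald :: "'a measure \<Rightarrow> ('a \<Rightarrow> real) \<Rightarrow> ('a \<Rightarrow> bool) \<Rightarrow> ('a \<Rightarrow> 'l \<Rightarrow> bool) \<Rightarrow> 'l \<Rightarrow> real" where
  "Wald M Y D Z l = rhoIV M Y Z l / piIV M D Z l"

definition gammaIV :: "'a measure \<Rightarrow> ('a \<Rightarrow> bool) \<Rightarrow> ('a \<Rightarrow> 'l \<Rightarrow> bool) \<Rightarrow> 'l \<Rightarrow> real" where
  "gammaIV M D Z l =
     (\<integral>\<omega>. of_bool (D \<omega>) * of_bool (Z \<omega> l) \<partial>M) - (\<integral>\<omega>. of_bool (D \<omega>) \<partial>M) * pZ M Z l"

definition SigmaZ :: "'a measure \<Rightarrow> ('a \<Rightarrow> 'l \<Rightarrow> bool) \<Rightarrow> 'l \<Rightarrow> 'l \<Rightarrow> real" where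
  "SigmaZ M Z l k = (\<integral>\<omega>. of_bool (Z \<omega> l) * of_bool (Z \<omega> k) \<partial>M) - pZ M Z l * pZ M Z k"

definition epsW :: "'a measure \<Rightarrow> ('a \<Rightarrow> real) \<Rightarrow> ('a \<Rightarrow> bool) \<Rightarrow> ('a \<Rightarrow> 'l \<Rightarrow> bool) \<Rightarrow> 'l \<Rightarrow> 'a \<Rightarrow> real" where
  "epsW M Y D Z l \<omega> = Y \<omega> - Wald M Y D Z l * of_bool (D \<omega>)
     - ((\<integral>\<omega>'. Y \<omega>' \<partial>M) - Wald M Y D Z l * (\<integral>\<omega>'. of_bool (D \<omega>') \<partial>M))"

definition GammaWald :: "'a measure \<Rightarrow> ('a \<Rightarrow> real) \<Rightarrow> ('a \<Rightarrow> bool) \<Rightarrow> ('a \<Rightarrow> 'l \<Rightarrow> bool) \<Rightarrow> 'l \<Rightarrow> 'l \<Rightarrow> real" where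
  "GammaWald M Y D Z l k =
     (\<integral>\<omega>. epsW M Y D Z l \<omega> * epsW M Y D Z k \<omega>
          * (of_bool (Z \<omega> l) - pZ M Z l) * (of_bool (Z \<omega> k) - pZ M Z k) \<partial>M)
     / (gammaIV M D Z l * gammaIV M D Z k)"

definition posdef :: "('l::finite \<Rightarrow> 'l \<Rightarrow> real) \<Rightarrow> bool" where
  "posdef G \<longleftrightarrow> (\<forall>x::'l \<Rightarrow> real. (\<exists>l. x l \<noteq> 0) \<longrightarrow> (\<Sum>l\<in>UNIV. \<Sum>k\<in>UNIV. x l * G l k * x k) > 0)"

definition quadform :: "('l::finite \<Rightarrow> 'l \<Rightarrow> real) \<Rightarrow> ('l \<Rightarrow> real) \<Rightarrow> real" where
  "quadform G x = (\<Sum>l\<in>UNIV. \<Sum>k\<in>UNIV. x l * G l k * x k)"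

definition hfun :: "'a measure \<Rightarrow> ('a \<Rightarrow> 'l \<Rightarrow> bool) \<Rightarrow> (('l \<Rightarrow> bool) \<Rightarrow> real) \<Rightarrow> 'l \<Rightarrow> real \<Rightarrow> real" where
  "hfun M Z p l u = cdiff M Z (\<lambda>\<omega>. of_bool (p (Z \<omega>) \<ge> u)) l / cdiff M Z (\<lambda>\<omega>. p (Z \<omega>)) l"

definition hbar :: "'a measure \<Rightarrow> ('a \<Rightarrow> 'l::finite \<Rightarrow> bool) \<Rightarrow> (('l \<Rightarrow> bool) \<Rightarrow> real) \<Rightarrow> ('l \<Rightarrow> real) \<Rightarrow> real \<Rightarrow> real" where
  "hbar M Z p w u = (\<Sum>l\<in>UNIV. w l * hfun M Z p l u)"

text \<open>Policy weights: Q0, Q1 are the distributions of the propensity score under policies 0 and 1;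
  F_j(u) = P(p(Z) \<ge> u | policy j).\<close>
definition Fpol :: "real measure \<Rightarrow> real \<Rightarrow> real" where
  "Fpol Q u = measure Q {u..}"

definition wP :: "real measure \<Rightarrow> real measure \<Rightarrow> real \<Rightarrow> real" where
  "wP Q0 Q1 u = (Fpol Q0 u - Fpol Q1 u) / (LINT s:{0..1}|lborel. Fpol Q0 s - Fpol Q1 s)"

definition prob_simplex :: "('l::finite \<Rightarrow> real) set" where
  "prob_simplex = {w. (\<forall>l. 0 \<le> w l) \<and> (\<Sum>l\<in>UNIV. w l) = 1}"

definition fitloss :: "'a measure \<Rightarrow> ('a \<Rightarrow> 'l::finite \<Rightarrow> bool) \<Rightarrow> (('l \<Rightarrow> bool) \<Rightarrow> real)
    \<Rightarrow> real measure \<Rightarrow> real measure \<Rightarrow> ('l \<Rightarrow> real) \<Rightarrow> real" where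
  "fitloss M Z p Q0 Q1 w = (LINT u:{0..1}|lborel. (hbar M Z p w u - wP Q0 Q1 u)\<^sup>2)"

definition Sset :: "'a measure \<Rightarrow> ('a \<Rightarrow> 'l::finite \<Rightarrow> bool) \<Rightarrow> (('l \<Rightarrow> bool) \<Rightarrow> real)
    \<Rightarrow> real measure \<Rightarrow> real measure \<Rightarrow> ('l \<Rightarrow> real) set" where
  "Sset M Z p Q0 Q1 = {w \<in> prob_simplex. \<forall>w'\<in>prob_simplex. fitloss M Z p Q0 Q1 w \<le> fitloss M Z p Q0 Q1 w'}"

text \<open>Independence of two random variables with possibly different codomains
  (the library's indep_var requires a common codomain type).\<close>
definition indep2 :: "'a measure \<Rightarrow> 'b measure \<Rightarrow> ('a \<Rightarrow> 'b) \<Rightarrow> 'c measure \<Rightarrow> ('a \<Rightarrow> 'c) \<Rightarrow> bool" where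
  "indep2 M MA X MB W \<longleftrightarrow>
     X \<in> measurable M MA \<and> W \<in> measurable M MB \<and>
     (\<forall>A\<in>sets MA. \<forall>B\<in>sets MB.
        measure M (X -` A \<inter> W -` B \<inter> space M) = measure M (X -` A \<inter> space M) * measure M (W -` B \<inter> space M))"

end

theory Submission
  imports Defs
begin

text \<open>The fit loss is the squared \<open>L\<^sup>2[0,1]\<close> distance between \<open>h\<^bsub>\<omega>\<^esub> = \<Sum>\<^sub>l \<omega>\<^sub>l h\<^sub>l\<close> and
  \<open>w\<^sup>P\<close>. Since all \<open>h\<^sub>l\<close> and \<open>w\<^sup>P\<close> are bounded Borel functions, it is a quadratic polynomial in
  \<open>\<omega>\<close>, hence continuous, and it is (midpoint) convex. So its set \<open>S\<close> of minimisers over the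
  compact convex simplex is nonempty, compact and convex, and on such a set the positive
  definite form \<open>\<omega>'\<Gamma>\<omega>\<close>, being strictly convex, attains its minimum exactly once.
  Only measurability of \<open>Z\<close> and positive definiteness of \<open>\<Gamma>\<^sup>W\<^sup>a\<^sup>l\<^sup>d\<close> enter.\<close>

lemma compact_prob_simplex: "compact (prob_simplex :: ('l::finite \<Rightarrow> real) set)"
proof -
  have "compact (PiE UNIV (\<lambda>_::'l. {0..1::real}))"
    using compactin_PiE[of "\<lambda>_::'l. euclidean" UNIV "\<lambda>_. {0..1::real}"]
    by (simp add: euclidean_product_topology)
  moreover have "closed {w::'l \<Rightarrow> real. (\<Sum>l\<in>UNIV. w l) = 1}"
    by (intro closed_Collect_eq continuous_intros continuous_on_id
          continuous_on_product_then_coordinatewise)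
  moreover have "prob_simplex = PiE UNIV (\<lambda>_::'l. {0..1::real}) \<inter> {w. (\<Sum>l\<in>UNIV. w l) = 1}"
  proof (auto simp: prob_simplex_def PiE_UNIV_domain)
    fix w :: "'l \<Rightarrow> real" and l
    assume "\<forall>l. 0 \<le> w l" "sum w UNIV = 1"
    then show "w l \<le> 1" using member_le_sum[of l UNIV w] by auto
  qed
  ultimately show ?thesis by (metis compact_Int_closed)
qed

lemma prob_simplex_nonempty: "(prob_simplex :: ('l::finite \<Rightarrow> real) set) \<noteq> {}"
proof -
  have "(\<lambda>_::'l. 1 / real CARD('l)) \<in> prob_simplex" by (simp add: prob_simplex_def)
  then show ?thesis by blast
qed

lemma prob_simplex_midpoint:
  "a \<in> prob_simplex \<Longrightarrow> b \<in> prob_simplex \<Longrightarrow> (\<lambda>l. (a l + b l) / 2) \<in> prob_simplex"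
  by (auto simp: prob_simplex_def sum.distrib sum_divide_distrib[symmetric])

lemma continuous_on_quadform: "continuous_on A (quadform G)"
  unfolding quadform_def
  by (intro continuous_intros continuous_on_id continuous_on_product_then_coordinatewise)

lemma quadform_midpoint:
  fixes G :: "'l::finite \<Rightarrow> 'l \<Rightarrow> real"
  shows "quadform G a + quadform G b - 2 * quadform G (\<lambda>l. (a l + b l) / 2)
    = quadform G (\<lambda>l. a l - b l) / 2"
proof -
  have "quadform G a + quadform G b - 2 * quadform G (\<lambda>l. (a l + b l) / 2)
     = (\<Sum>l\<in>UNIV. \<Sum>k\<in>UNIV. a l * G l k * a k + b l * G l k * b k
          - 2 * ((a l + b l) / 2 * G l k * ((a k + b k) / 2)))"
    unfolding quadform_def by (simp add: sum.distrib sum_subtractf sum_distrib_left)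
  also have "\<dots> = (\<Sum>l\<in>UNIV. \<Sum>k\<in>UNIV. (a l - b l) * G l k * (a k - b k) / 2)"
    by (intro sum.cong refl) (simp add: field_simps)
  finally show ?thesis
    unfolding quadform_def by (simp add: sum_divide_distrib)
qed

lemma posdef_quadform_pos: "posdef G \<Longrightarrow> x l \<noteq> 0 \<Longrightarrow> quadform G x > 0"
  unfolding posdef_def quadform_def by blast

lemma posdef_quadform_argmin_unique:
  fixes G :: "'l::finite \<Rightarrow> 'l \<Rightarrow> real"
  assumes "compact K" "K \<noteq> {}"
    and midpoint: "\<And>a b. a \<in> K \<Longrightarrow> b \<in> K \<Longrightarrow> (\<lambda>l. (a l + b l) / 2) \<in> K"
    and "posdef G"
  shows "\<exists>!w. w \<in> K \<and> (\<forall>w'\<in>K. quadform G w \<le> quadform G w')"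
proof -
  obtain a where a: "a \<in> K" "\<forall>w'\<in>K. quadform G a \<le> quadform G w'"
    using continuous_attains_inf[OF assms(1,2) continuous_on_quadform] by blast
  have "b = a" if b: "b \<in> K" "\<forall>w'\<in>K. quadform G b \<le> quadform G w'" for b
  proof (rule ccontr)
    assume "b \<noteq> a"
    then have "quadform G (\<lambda>l. a l - b l) > 0"
      using \<open>posdef G\<close> posdef_quadform_pos by (metis eq_iff_diff_eq_0 ext)
    moreover have "quadform G a = quadform G b"
      using a b by (meson order_antisym)
    ultimately have "quadform G (\<lambda>l. (a l + b l) / 2) < quadform G a"
      using quadform_midpoint[of G a b] by linarith
    then show False
      using a midpoint[OF a(1) b(1)] by force
  qed
  with a show ?thesis by blast
qed

lemma compact_argmin_prob_simplex:
  fixes F :: "('l::finite \<Rightarrow> real) \<Rightarrow> real"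
  assumes "continuous_on UNIV F"
  shows "compact {w \<in> prob_simplex. \<forall>w'\<in>prob_simplex. F w \<le> F w'}"
proof -
  have "{w \<in> prob_simplex. \<forall>w'\<in>prob_simplex. F w \<le> F w'}
      = prob_simplex \<inter> (\<Inter>w'\<in>prob_simplex. {w. F w \<le> F w'})"
    by auto
  moreover have "closed (\<Inter>w'\<in>prob_simplex. {w. F w \<le> F w'})"
    using assms by (intro closed_INT ballI closed_Collect_le continuous_on_const)
  ultimately show ?thesis
    by (simp add: compact_Int_closed compact_prob_simplex)
qed

lemma argmin_prob_simplex_nonempty:
  fixes F :: "('l::finite \<Rightarrow> real) \<Rightarrow> real"
  assumes "continuous_on UNIV F"
  shows "{w \<in> prob_simplex. \<forall>w'\<in>prob_simplex. F w \<le> F w'} \<noteq> {}"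
  using continuous_attains_inf[OF compact_prob_simplex prob_simplex_nonempty
      continuous_on_subset[OF assms]] by blast

lemma argmin_prob_simplex_midpoint:
  fixes F :: "('l::finite \<Rightarrow> real) \<Rightarrow> real"
  assumes "\<And>a b. F (\<lambda>l. (a l + b l) / 2) \<le> (F a + F b) / 2"
    and "a \<in> {w \<in> prob_simplex. \<forall>w'\<in>prob_simplex. F w \<le> F w'}"
    and "b \<in> {w \<in> prob_simplex. \<forall>w'\<in>prob_simplex. F w \<le> F w'}"
  shows "(\<lambda>l. (a l + b l) / 2) \<in> {w \<in> prob_simplex. \<forall>w'\<in>prob_simplex. F w \<le> F w'}"
  using assms(2,3) prob_simplex_midpoint[of a b] assms(1)[of a b] by fastforce

definition bounded_measurable :: "'b measure \<Rightarrow> ('b \<Rightarrow> real) \<Rightarrow> bool" where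
  "bounded_measurable N f \<longleftrightarrow> f \<in> borel_measurable N \<and> (\<exists>B. \<forall>x. \<bar>f x\<bar> \<le> B)"

lemma bounded_measurable_const: "bounded_measurable N (\<lambda>x. c)"
  by (auto simp: bounded_measurable_def)

lemma bounded_measurable_add:
  assumes "bounded_measurable N f" "bounded_measurable N g"
  shows "bounded_measurable N (\<lambda>x. f x + g x)"
proof -
  obtain B C where "\<forall>x. \<bar>f x\<bar> \<le> B" "\<forall>x. \<bar>g x\<bar> \<le> C"
    using assms by (auto simp: bounded_measurable_def)
  then have "\<bar>f x + g x\<bar> \<le> B + C" for x
    by (meson abs_triangle_ineq add_mono order_trans)
  with assms show ?thesis by (auto simp: bounded_measurable_def)
qed

lemma bounded_measurable_mult:
  assumes "bounded_measurable N f" "bounded_measurable N g"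
  shows "bounded_measurable N (\<lambda>x. f x * g x)"
proof -
  obtain B C where "\<forall>x. \<bar>f x\<bar> \<le> B" "\<forall>x. \<bar>g x\<bar> \<le> C"
    using assms by (auto simp: bounded_measurable_def)
  then have "\<bar>f x * g x\<bar> \<le> B * C" for x
    unfolding abs_mult by (intro mult_mono) (auto intro: order_trans)
  with assms show ?thesis by (auto simp: bounded_measurable_def)
qed

lemma bounded_measurable_diff:
  "bounded_measurable N f \<Longrightarrow> bounded_measurable N g \<Longrightarrow> bounded_measurable N (\<lambda>x. f x - g x)"
  using bounded_measurable_add[of N f "\<lambda>x. (-1) * g x"]
    bounded_measurable_mult[OF bounded_measurable_const, of N g "-1"]
  by simp

lemma bounded_measurable_divide:
  "bounded_measurable N f \<Longrightarrow> bounded_measurable N (\<lambda>x. f x / c)"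
  using bounded_measurable_mult[OF _ bounded_measurable_const, of N f "1 / c"] by simp

lemma bounded_measurable_sum:
  "(\<And>i. i \<in> A \<Longrightarrow> bounded_measurable N (f i)) \<Longrightarrow> bounded_measurable N (\<lambda>x. \<Sum>i\<in>A. f i x)"
  by (induction A rule: infinite_finite_induct)
    (auto intro: bounded_measurable_add bounded_measurable_const)

lemmas bounded_measurable_intros =
  bounded_measurable_const bounded_measurable_add bounded_measurable_mult
  bounded_measurable_diff bounded_measurable_sum

lemma bounded_measurable_set_integrable:
  assumes "bounded_measurable N f" "S \<in> sets N" "emeasure N S < \<infinity>"
  shows "set_integrable N S f"
proof -
  obtain B where "\<forall>x. \<bar>f x\<bar> \<le> B" "f \<in> borel_measurable N"
    using assms(1) by (auto simp: bounded_measurable_def)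
  then show ?thesis
    unfolding set_integrable_def
    by (intro integrableI_bounded_set_indicator[where B = B] assms(2,3)) auto
qed

lemma set_integral_sum:
  fixes f :: "'i \<Rightarrow> 'b \<Rightarrow> real"
  assumes "\<And>i. i \<in> A \<Longrightarrow> set_integrable N S (f i)"
  shows "(LINT x:S|N. (\<Sum>i\<in>A. f i x)) = (\<Sum>i\<in>A. (LINT x:S|N. f i x))"
  using assms unfolding set_lebesgue_integral_def set_integrable_def scaleR_sum_right
  by (intro Bochner_Integration.integral_sum)

definition lsq_loss ::
    "'b measure \<Rightarrow> 'b set \<Rightarrow> ('l::finite \<Rightarrow> 'b \<Rightarrow> real) \<Rightarrow> ('b \<Rightarrow> real) \<Rightarrow> ('l \<Rightarrow> real) \<Rightarrow> real" where
  "lsq_loss N S h g w = (LINT u:S|N. ((\<Sum>l\<in>UNIV. w l * h l u) - g u)\<^sup>2)"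

lemma lsq_loss_expand:
  fixes h :: "'l::finite \<Rightarrow> 'b \<Rightarrow> real"
  assumes h: "\<And>l. bounded_measurable N (h l)" and g: "bounded_measurable N g"
    and S: "S \<in> sets N" "emeasure N S < \<infinity>"
  shows "lsq_loss N S h g w
    = (\<Sum>l\<in>UNIV. \<Sum>k\<in>UNIV. w l * w k * (LINT u:S|N. h l u * h k u))
      - 2 * (\<Sum>l\<in>UNIV. w l * (LINT u:S|N. h l u * g u))
      + (LINT u:S|N. g u * g u)"
proof -
  note integrable = bounded_measurable_set_integrable[OF _ S]
  have "((\<Sum>l\<in>UNIV. w l * h l u) - g u)\<^sup>2 =
      (\<Sum>l\<in>UNIV. \<Sum>k\<in>UNIV. w l * w k * (h l u * h k u))
      - (\<Sum>l\<in>UNIV. 2 * w l * (h l u * g u)) + g u * g u" for u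
    by (simp add: power2_eq_square algebra_simps sum_product sum_distrib_left sum_distrib_right)
  then have "lsq_loss N S h g w
     = (LINT u:S|N. (\<Sum>l\<in>UNIV. \<Sum>k\<in>UNIV. w l * w k * (h l u * h k u)))
      - (LINT u:S|N. (\<Sum>l\<in>UNIV. 2 * w l * (h l u * g u))) + (LINT u:S|N. g u * g u)"
    unfolding lsq_loss_def
    by (simp add: integrable bounded_measurable_intros h g set_integral_add set_integral_diff)
  also have "\<dots> = (\<Sum>l\<in>UNIV. \<Sum>k\<in>UNIV. w l * w k * (LINT u:S|N. h l u * h k u))
      - (\<Sum>l\<in>UNIV. 2 * w l * (LINT u:S|N. h l u * g u)) + (LINT u:S|N. g u * g u)"
    by (simp add: set_integral_sum integrable bounded_measurable_intros h g)
  finally show ?thesis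
    by (simp add: sum_distrib_left mult.assoc)
qed

lemma continuous_on_lsq_loss:
  fixes h :: "'l::finite \<Rightarrow> 'b \<Rightarrow> real"
  assumes "\<And>l. bounded_measurable N (h l)" "bounded_measurable N g"
    and "S \<in> sets N" "emeasure N S < \<infinity>"
  shows "continuous_on A (lsq_loss N S h g)"
  unfolding lsq_loss_expand[OF assms, abs_def]
  by (intro continuous_intros continuous_on_id continuous_on_product_then_coordinatewise)

lemma lsq_loss_midpoint_convex:
  fixes h :: "'l::finite \<Rightarrow> 'b \<Rightarrow> real"
  assumes h: "\<And>l. bounded_measurable N (h l)" and g: "bounded_measurable N g"
    and S: "S \<in> sets N" "emeasure N S < \<infinity>"
  shows "lsq_loss N S h g (\<lambda>l. (a l + b l) / 2) \<le> (lsq_loss N S h g a + lsq_loss N S h g b) / 2"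
proof -
  define r where "r w u = (\<Sum>l\<in>UNIV. w l * h l u) - g u" for w u
  have integrable: "set_integrable N S (\<lambda>u. (r w u)\<^sup>2)" for w
    unfolding r_def power2_eq_square
    by (intro bounded_measurable_set_integrable[OF _ S] bounded_measurable_intros h g)
  have midpoint: "r (\<lambda>l. (a l + b l) / 2) u = (r a u + r b u) / 2" for u
    by (simp add: r_def sum.distrib sum_divide_distrib[symmetric] algebra_simps add_divide_distrib)
  have square_convex: "((x + y) / 2)\<^sup>2 \<le> x\<^sup>2 / 2 + y\<^sup>2 / 2" for x y :: real
    using zero_le_power2[of "x - y"] by (simp add: power2_eq_square field_simps)
  have "(r (\<lambda>l. (a l + b l) / 2) u)\<^sup>2 \<le> (r a u)\<^sup>2 / 2 + (r b u)\<^sup>2 / 2" for u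
    unfolding midpoint by (rule square_convex)
  then have "(LINT u:S|N. (r (\<lambda>l. (a l + b l) / 2) u)\<^sup>2)
      \<le> (LINT u:S|N. (r a u)\<^sup>2 / 2 + (r b u)\<^sup>2 / 2)"
    by (intro set_integral_mono integrable set_integral_add) (auto simp: integrable)
  also have "\<dots> = ((LINT u:S|N. (r a u)\<^sup>2) + (LINT u:S|N. (r b u)\<^sup>2)) / 2"
    using integrable by (simp add: set_integral_divide_zero)
  finally show ?thesis
    unfolding lsq_loss_def r_def .
qed

lemma antimono_bounded_measurable:
  fixes f :: "real \<Rightarrow> real"
  assumes "antimono f" "\<And>u. \<bar>f u\<bar> \<le> B"
  shows "bounded_measurable lborel f"
proof -
  have "mono (\<lambda>u. - f u)"
    using assms(1) by (simp add: antimono_def monoI)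
  then have "(\<lambda>u. - (- f u)) \<in> borel_measurable borel"
    by (intro borel_measurable_uminus borel_measurable_mono)
  with assms(2) show ?thesis
    by (auto simp: bounded_measurable_def)
qed

lemma cexp_of_bool:
  assumes "finite_measure M" "A \<in> sets M" "{\<omega> \<in> space M. P \<omega>} \<in> sets M"
  shows "cexp M (\<lambda>\<omega>. of_bool (P \<omega>)) A = measure M (A \<inter> {\<omega> \<in> space M. P \<omega>}) / measure M A"
proof -
  interpret finite_measure M by fact
  have "(\<integral>\<omega>. indicator A \<omega> * of_bool (P \<omega>) \<partial>M)
      = (\<integral>\<omega>. indicator (A \<inter> {\<omega> \<in> space M. P \<omega>}) \<omega> \<partial>M :: real)"
    by (intro Bochner_Integration.integral_cong) (auto split: split_indicator)
  also have "\<dots> = measure M (A \<inter> {\<omega> \<in> space M. P \<omega>})"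
    using sets.sets_into_space[OF assms(2)] by (simp add: Int_absorb2 Int_assoc)
  finally show ?thesis
    by (simp add: cexp_def)
qed

lemma bounded_measurable_cexp_ge:
  fixes X :: "'a \<Rightarrow> real"
  assumes "finite_measure M" "A \<in> sets M" and [measurable]: "X \<in> borel_measurable M"
  shows "bounded_measurable lborel (\<lambda>u. cexp M (\<lambda>\<omega>. of_bool (X \<omega> \<ge> u)) A)"
proof -
  interpret finite_measure M by fact
  define T where "T u = A \<inter> {\<omega> \<in> space M. u \<le> X \<omega>}" for u
  have T_sets: "T u \<in> sets M" for u
    unfolding T_def by (intro sets.Int assms(2)) measurable
  have cexp_eq: "cexp M (\<lambda>\<omega>. of_bool (X \<omega> \<ge> u)) A = measure M (T u) / measure M A" for u
    unfolding T_def by (intro cexp_of_bool assms) measurable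
  have "antimono (\<lambda>u. measure M (T u) / measure M A)"
    by (intro antimonoI divide_right_mono finite_measure_mono T_sets) (auto simp: T_def)
  moreover have "\<bar>measure M (T u) / measure M A\<bar> \<le> 1" for u
  proof -
    have "measure M (T u) \<le> measure M A"
      using assms(2) by (intro finite_measure_mono) (auto simp: T_def)
    then show ?thesis
      by (cases "measure M A = 0") (auto simp: divide_le_eq_1 zero_less_measure_iff)
  qed
  ultimately show ?thesis
    unfolding cexp_eq by (rule antimono_bounded_measurable)
qed

lemma sets_evZ:
  assumes "Z \<in> measurable M (count_space UNIV)"
  shows "evZ M Z l z \<in> sets M"
proof -
  have "(\<lambda>\<omega>. Z \<omega> l) \<in> measurable M (count_space UNIV)"
    using measurable_compose[OF assms, of "\<lambda>f. f l"] by simp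
  then show ?thesis
    unfolding evZ_def by measurable
qed

lemma bounded_measurable_hfun:
  assumes "finite_measure M" "Z \<in> measurable M (count_space UNIV)"
  shows "bounded_measurable lborel (hfun M Z p l)"
proof -
  have "(\<lambda>\<omega>. p (Z \<omega>)) \<in> borel_measurable M"
    using measurable_compose[OF assms(2), of p borel] by simp
  then show ?thesis
    unfolding hfun_def[abs_def] cdiff_def
    by (intro bounded_measurable_divide bounded_measurable_diff bounded_measurable_cexp_ge
        sets_evZ assms)
qed

lemma bounded_measurable_Fpol:
  assumes "finite_measure Q" "sets Q = sets borel"
  shows "bounded_measurable lborel (Fpol Q)"
proof -
  interpret finite_measure Q by fact
  have "antimono (Fpol Q)"
    unfolding Fpol_def using assms(2) by (intro antimonoI finite_measure_mono) auto
  moreover have "\<bar>Fpol Q u\<bar> \<le> measure Q (space Q)" for u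
    unfolding Fpol_def using assms(2) by (simp add: bounded_measure)
  ultimately show ?thesis
    by (rule antimono_bounded_measurable)
qed

lemma bounded_measurable_wP:
  assumes "finite_measure Q0" "sets Q0 = sets borel" "finite_measure Q1" "sets Q1 = sets borel"
  shows "bounded_measurable lborel (wP Q0 Q1)"
  unfolding wP_def[abs_def]
  by (intro bounded_measurable_divide bounded_measurable_diff bounded_measurable_Fpol assms)

lemma fitloss_eq_lsq_loss:
  "fitloss M Z p Q0 Q1 = lsq_loss lborel {0..1} (hfun M Z p) (wP Q0 Q1)"
  unfolding fitloss_def[abs_def] lsq_loss_def[abs_def] hbar_def ..

theorem proposition15:
  fixes M :: "'a measure"
    and Y Y0 Y1 U :: "'a \<Rightarrow> real"
    and D :: "'a \<Rightarrow> bool"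
    and Z :: "'a \<Rightarrow> 'l::finite \<Rightarrow> bool"
    and Dfun :: "'a \<Rightarrow> ('l \<Rightarrow> bool) \<Rightarrow> bool"
    and V :: "('l \<Rightarrow> bool) \<Rightarrow> real"
    and Q0 Q1 :: "real measure"
  assumes L2: "CARD('l) \<ge> 2"
    and P: "prob_space M"
    and measZ: "Z \<in> measurable M (count_space UNIV)"
    and measDfun: "Dfun \<in> measurable M (count_space UNIV)"
    and measD: "D \<in> measurable M (count_space UNIV)"
    and measY: "Y \<in> borel_measurable M" "Y0 \<in> borel_measurable M" "Y1 \<in> borel_measurable M"
    and measU: "U \<in> borel_measurable M"
    and Dobs: "\<forall>\<omega>\<in>space M. D \<omega> = Dfun \<omega> (Z \<omega>)"
    and Yobs: "\<forall>\<omega>\<in>space M. Y \<omega> = (if D \<omega> then Y1 \<omega> else Y0 \<omega>)"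
    and A1: "indep2 M
               (borel \<Otimes>\<^sub>M borel \<Otimes>\<^sub>M count_space UNIV) (\<lambda>\<omega>. (Y0 \<omega>, Y1 \<omega>, Dfun \<omega>))
               (count_space UNIV) Z"
    and A2: "\<forall>\<omega>\<in>space M. mono (Dfun \<omega>)"
    and A3p: "\<forall>l. pZ M Z l > 0"
    and A3pi: "\<forall>l. piIV M D Z l > 0"
    and A3Sigma: "posdef (SigmaZ M Z)"
    and LI_index: "\<forall>\<omega>\<in>space M. \<forall>z. Dfun \<omega> z = (V z \<ge> U \<omega>)"
    and LI_unif: "distr M lborel U = uniform_measure lborel {0..1}"
    and LI_indep: "indep2 M borel U (borel \<Otimes>\<^sub>M borel) (\<lambda>\<omega>. (Y0 \<omega>, Y1 \<omega>))"
    and LI_pscore: "\<forall>z. measure M {\<omega>\<in>space M. Z \<omega> = z} > 0 \<longrightarrow>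
                      V z = cexp M (\<lambda>\<omega>. of_bool (D \<omega>)) {\<omega>\<in>space M. Z \<omega> = z}"
    and Gamma_pd: "posdef (GammaWald M Y D Z)"
    and Q0: "prob_space Q0" "sets Q0 = sets borel"
    and Q1: "prob_space Q1" "sets Q1 = sets borel"
    and policy_nz: "(LINT s:{0..1}|lborel. Fpol Q0 s - Fpol Q1 s) \<noteq> 0"
  shows "\<exists>!w. w \<in> Sset M Z V Q0 Q1 \<and>
              (\<forall>w'\<in>Sset M Z V Q0 Q1. quadform (GammaWald M Y D Z) w \<le> quadform (GammaWald M Y D Z) w')"
proof -
  interpret prob_space M by (rule P)
  have h: "bounded_measurable lborel (hfun M Z V l)" for l
    by (intro bounded_measurable_hfun measZ finite_measure_axioms)
  have g: "bounded_measurable lborel (wP Q0 Q1)"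
    using Q0 Q1 by (intro bounded_measurable_wP) (auto simp: prob_space_def)
  have unit_interval: "{0..1::real} \<in> sets lborel" "emeasure lborel {0..1::real} < \<infinity>"
    by simp_all
  note loss = fitloss_eq_lsq_loss[of M Z V Q0 Q1]
  have "continuous_on UNIV (fitloss M Z V Q0 Q1)"
    unfolding loss by (rule continuous_on_lsq_loss[OF h g unit_interval])
  moreover have "fitloss M Z V Q0 Q1 (\<lambda>l. (a l + b l) / 2)
      \<le> (fitloss M Z V Q0 Q1 a + fitloss M Z V Q0 Q1 b) / 2" for a b
    unfolding loss by (rule lsq_loss_midpoint_convex[OF h g unit_interval])
  ultimately show ?thesis
    unfolding Sset_def
    by (intro posdef_quadform_argmin_unique compact_argmin_prob_simplex
        argmin_prob_simplex_nonempty argmin_prob_simplex_midpoint Gamma_pd)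
qed

end
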